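(* Let $a_1,\ldots,a_k$ be positive integers, $A=\sum_{j=1}^k a_j$, $n=k+2$, and $v=[4A+2;\,8a_1,\ldots,8a_k,\,1,\,1]$ (players $1,\ldots,n$). Let $v_{\&\{n-1,n\}}$ be the game in which player $n$ annexes player $n-1$, i.e. they are replaced by one player $\&\{n-1,n\}$ of weight $2$. Then $\beta_{\&\{n-1,n\}}(v_{\&\{n-1,n\}})>\beta_n(v)$ if and only if there is a set $P\subseteq\{1,\ldots,k\}$ with $\sum_{j\in P}a_j=\sum_{j\notin P}a_j$.
   Context: A weighted voting game $[q;w_1,\ldots,w_n]$ has players $1,\ldots,n$ with nonnegative weights $w_j$ and quota $q$, $0<q\le\sum_jw_j$; a coalition $S$ is winning iff $\sum_{j\in S}w_j\ge q$. Player $j$ is critical in $S$ if $S$ is winning and $S\setminus\{j\}$ is losing; $\eta_j$ is the number of coalitions in which $j$ is critical, and the Banzhaf index is $\beta_j=\eta_j/\sum_k\eta_k$. Merging a set $T$ of players yields the WVG with the same quota in which the players of $T$ are replaced by a single player $\&T$ of weight $\sum_{j\in T}w_j$. *)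

theory Defs
  imports Complex_Main
begin

definition winning :: "('p \<Rightarrow> real) \<Rightarrow> real \<Rightarrow> 'p set \<Rightarrow> bool" where
  "winning w q S \<longleftrightarrow> q \<le> (\<Sum>j\<in>S. w j)"

definition critical :: "('p \<Rightarrow> real) \<Rightarrow> real \<Rightarrow> 'p set \<Rightarrow> 'p \<Rightarrow> bool" where
  "critical w q S j \<longleftrightarrow> j \<in> S \<and> winning w q S \<and> \<not> winning w q (S - {j})"

definition eta :: "'p set \<Rightarrow> ('p \<Rightarrow> real) \<Rightarrow> real \<Rightarrow> 'p \<Rightarrow> nat" where
  "eta N w q j = card {S. S \<subseteq> N \<and> critical w q S j}"

definition banzhaf :: "'p set \<Rightarrow> ('p \<Rightarrow> real) \<Rightarrow> real \<Rightarrow> 'p \<Rightarrow> real" where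
  "banzhaf N w q j = real (eta N w q j) / real (\<Sum>k\<in>N. eta N w q k)"

text \<open>Merging the set T of players: they are replaced by a single player, labelled m
  (an element of T used as the name of the new player &T), of weight \<Sum>T.
  The quota stays the same.\<close>
definition merge_players :: "'p set \<Rightarrow> 'p set \<Rightarrow> 'p \<Rightarrow> 'p set" where
  "merge_players N T m = (N - T) \<union> {m}"

definition merge_weights :: "('p \<Rightarrow> real) \<Rightarrow> 'p set \<Rightarrow> 'p \<Rightarrow> ('p \<Rightarrow> real)" where
  "merge_weights w T m = w(m := (\<Sum>j\<in>T. w j))"

end

theory Submission imports Defs begin

(* In v = [4A+2; 8a_1,...,8a_k, 1, 1] a coalition S has weight
   8 s + c, where s is the a-sum of its large players and c the number of
   small players it contains.  Since 8 s is divisible by 8, a small player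
   is critical in S exactly when S contains both small players and 2 s = A;
   likewise the merged player of weight 2 is critical exactly when 2 s = A.
   So both small players of v and the merged player all have the swing count
   |G|, where G is the family of balanced sets P (2 * sum_P a = A).
   For a general weighted voting game, merging a block T never increases the
   swing count of a player outside T (coalitions of the merged game embed
   injectively into those of the original one).  Hence the total swing count
   drops by at least |G| under merging, and the Banzhaf index of the last
   player strictly increases iff G is nonempty, i.e. iff a partition exists. *)

section \<open>Merging players in a weighted voting game\<close>

text \<open>A coalition of the merged game, read back in the original game: the
  merged player m stands for the whole block T.\<close>
definition expand_coalition :: "'p set \<Rightarrow> 'p \<Rightarrow> 'p set \<Rightarrow> 'p set" where
  "expand_coalition T m S = (if m \<in> S then (S - {m}) \<union> T else S)"

lemma sum_merge_weights:
  assumes "finite S" "finite T" "m \<in> T" "S \<inter> T \<subseteq> {m}"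
  shows "(\<Sum>j\<in>S. merge_weights w T m j) = (\<Sum>j\<in>expand_coalition T m S. w j)"
proof (cases "m \<in> S")
  case True
  have disj: "(S - {m}) \<inter> T = {}" using assms(4) by auto
  have "(\<Sum>j\<in>S. merge_weights w T m j)
        = merge_weights w T m m + (\<Sum>j\<in>S - {m}. merge_weights w T m j)"
    using True assms(1) by (simp add: sum.remove)
  also have "\<dots> = (\<Sum>j\<in>T. w j) + (\<Sum>j\<in>S - {m}. w j)"
    by (simp add: merge_weights_def)
  also have "\<dots> = (\<Sum>j\<in>(S - {m}) \<union> T. w j)"
    using disj assms(1,2) by (simp add: sum.union_disjoint)
  finally show ?thesis using True by (simp add: expand_coalition_def)
next
  case False
  then show ?thesis
    by (auto simp: expand_coalition_def merge_weights_def intro!: sum.cong)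
qed

lemma winning_merge:
  assumes "finite S" "finite T" "m \<in> T" "S \<inter> T \<subseteq> {m}"
  shows "winning (merge_weights w T m) q S \<longleftrightarrow> winning w q (expand_coalition T m S)"
  using sum_merge_weights[OF assms] by (simp add: winning_def)

text \<open>Merging a block T never increases the swing count of a player outside T:
  expanding coalitions is injective and preserves criticality of j.\<close>
lemma eta_merge_le:
  assumes N: "finite N" "T \<subseteq> N" "m \<in> T" and j: "j \<in> N - T"
  shows "eta (merge_players N T m) (merge_weights w T m) q j \<le> eta N w q j"
  unfolding eta_def
proof (rule card_inj_on_le)
  let ?N' = "merge_players N T m" and ?w' = "merge_weights w T m"
  let ?f = "expand_coalition T m"
  have T: "finite T" using N finite_subset by blast
  have sub: "S \<subseteq> N - T \<union> {m}" if "S \<subseteq> ?N'" for S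
    using that by (simp add: merge_players_def)
  show "inj_on ?f {S. S \<subseteq> ?N' \<and> critical ?w' q S j}"
  proof (rule inj_on_inverseI)
    fix S assume "S \<in> {S. S \<subseteq> ?N' \<and> critical ?w' q S j}"
    then have "S \<subseteq> N - T \<union> {m}" using sub by blast
    then show "(\<lambda>R. if T \<subseteq> R then insert m (R - T) else R) (?f S) = S"
      using N(3) by (auto simp: expand_coalition_def)
  qed
  show "?f ` {S. S \<subseteq> ?N' \<and> critical ?w' q S j} \<subseteq> {S. S \<subseteq> N \<and> critical w q S j}"
  proof clarify
    fix S assume S: "S \<subseteq> ?N'" and crit: "critical ?w' q S j"
    have S': "S \<subseteq> N - T \<union> {m}" "finite S"
      using sub[OF S] N(1) by (auto intro: finite_subset)
    have disj: "S \<inter> T \<subseteq> {m}" "(S - {j}) \<inter> T \<subseteq> {m}" using S'(1) by auto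
    have "?f (S - {j}) = ?f S - {j}" "j \<in> ?f S \<longleftrightarrow> j \<in> S"
      using j N(3) by (auto simp: expand_coalition_def)
    moreover have "winning ?w' q S \<longleftrightarrow> winning w q (?f S)"
      "winning ?w' q (S - {j}) \<longleftrightarrow> winning w q (?f (S - {j}))"
      using disj S'(2) T N(3) by (simp_all add: winning_merge)
    ultimately have "critical w q (?f S) j"
      using crit by (simp add: critical_def)
    moreover have "?f S \<subseteq> N" using S' N(2,3) by (auto simp: expand_coalition_def)
    ultimately show "?f S \<subseteq> N \<and> critical w q (?f S) j" by blast
  qed
  show "finite {S. S \<subseteq> N \<and> critical w q S j}" using N(1) by simp
qed

lemma eta_merged_player:
  assumes N: "finite N" "T \<subseteq> N" "m \<in> T"
  shows "eta (merge_players N T m) (merge_weights w T m) q m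
         = card {R. R \<subseteq> N - T \<and> winning w q (R \<union> T) \<and> \<not> winning w q R}"
proof -
  let ?N' = "merge_players N T m" and ?w' = "merge_weights w T m"
  let ?B = "{R. R \<subseteq> N - T \<and> winning w q (R \<union> T) \<and> \<not> winning w q R}"
  have T: "finite T" using N finite_subset by blast
  have "{S. S \<subseteq> ?N' \<and> critical ?w' q S m} = insert m ` ?B"
  proof (intro equalityI subsetI)
    fix S assume "S \<in> {S. S \<subseteq> ?N' \<and> critical ?w' q S m}"
    then have S: "S \<subseteq> N - T \<union> {m}" "m \<in> S" and crit: "critical ?w' q S m"
      by (auto simp: merge_players_def critical_def)
    have fin: "finite S" using S(1) N(1) finite_subset by blast
    have "winning w q ((S - {m}) \<union> T)" "\<not> winning w q (S - {m})"
      using crit S fin T N(3) winning_merge[of S T m w q] winning_merge[of "S - {m}" T m w q]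
      by (auto simp: critical_def expand_coalition_def)
    moreover have "S = insert m (S - {m})" "S - {m} \<subseteq> N - T" using S by auto
    ultimately show "S \<in> insert m ` ?B" by blast
  next
    fix S assume "S \<in> insert m ` ?B"
    then obtain R where R: "R \<subseteq> N - T" "winning w q (R \<union> T)" "\<not> winning w q R"
      and S: "S = insert m R" by blast
    have fin: "finite R" using R(1) N(1) finite_subset by blast
    have "m \<notin> R" using R(1) N(3) by auto
    then have "winning ?w' q S" "\<not> winning ?w' q (S - {m})"
      using R fin T N(3) S winning_merge[of S T m w q] winning_merge[of R T m w q]
      by (auto simp: expand_coalition_def insert_absorb Un_commute)
    moreover have "S \<subseteq> ?N'" using R(1) S by (auto simp: merge_players_def)
    ultimately show "S \<in> {S. S \<subseteq> ?N' \<and> critical ?w' q S m}"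
      using S by (simp add: critical_def)
  qed
  moreover have "inj_on (insert m) ?B" using N(3) by (auto intro!: inj_onI)
  ultimately show ?thesis unfolding eta_def by (simp add: card_image)
qed

section \<open>The game built from a partition instance\<close>

context
  fixes a :: "nat \<Rightarrow> nat" and k :: nat
begin

definition partition_weight :: "nat \<Rightarrow> real" where
  "partition_weight j =
     (if j \<in> {1..k} then 8 * real (a j) else if j = k + 1 \<or> j = k + 2 then 1 else 0)"

definition partition_quota :: real where
  "partition_quota = 4 * real (\<Sum>j=1..k. a j) + 2"

definition balanced_sets :: "nat set set" where
  "balanced_sets = {P. P \<subseteq> {1..k} \<and> 2 * (\<Sum>j\<in>P. a j) = (\<Sum>j=1..k. a j)}"

lemma balanced_sets_nonempty_iff:
  "balanced_sets \<noteq> {} \<longleftrightarrow> (\<exists>P \<subseteq> {1..k}. (\<Sum>j\<in>P. a j) = (\<Sum>j\<in>{1..k} - P. a j))"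
proof -
  have "(\<Sum>j\<in>P. a j) = (\<Sum>j\<in>{1..k} - P. a j) \<longleftrightarrow> 2 * (\<Sum>j\<in>P. a j) = (\<Sum>j=1..k. a j)"
    if "P \<subseteq> {1..k}" for P
    using sum.subset_diff[OF that, of a] by simp
  then show ?thesis unfolding balanced_sets_def by blast
qed

lemma finite_balanced_sets: "finite balanced_sets"
  by (rule finite_subset[of _ "Pow {1..k}"]) (auto simp: balanced_sets_def)

lemma partition_winning_iff:
  assumes "S \<subseteq> {1..k+2}"
  shows "winning partition_weight partition_quota S \<longleftrightarrow>
         4 * (\<Sum>j=1..k. a j) + 2 \<le> 8 * (\<Sum>j\<in>S \<inter> {1..k}. a j) + card (S \<inter> {k+1, k+2})"
proof -
  have split: "S = (S \<inter> {1..k}) \<union> (S \<inter> {k+1, k+2})" using assms by auto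
  have "(\<Sum>j\<in>S. partition_weight j)
        = (\<Sum>j\<in>S \<inter> {1..k}. partition_weight j) + (\<Sum>j\<in>S \<inter> {k+1, k+2}. partition_weight j)"
    by (subst split, rule sum.union_disjoint) auto
  also have "\<dots> = (\<Sum>j\<in>S \<inter> {1..k}. 8 * real (a j)) + (\<Sum>j\<in>S \<inter> {k+1, k+2}. 1)"
    by (intro arg_cong2[where f = "(+)"] sum.cong) (auto simp: partition_weight_def)
  also have "\<dots> = real (8 * (\<Sum>j\<in>S \<inter> {1..k}. a j) + card (S \<inter> {k+1, k+2}))"
    by (simp add: sum_distrib_left)
  finally show ?thesis
    unfolding winning_def partition_quota_def
    by (metis (mono_tags, lifting) of_nat_add of_nat_le_iff of_nat_mult of_nat_numeral)
qed

text \<open>By divisibility of 8 s, a small player is critical exactly in the coalitions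
  consisting of both small players and a balanced set.\<close>
lemma critical_small_iff:
  assumes S: "S \<subseteq> {1..k+2}" and i: "i \<in> {k+1, k+2}"
  shows "critical partition_weight partition_quota S i \<longleftrightarrow>
         {k+1, k+2} \<subseteq> S \<and> S \<inter> {1..k} \<in> balanced_sets"
proof -
  define A where "A = (\<Sum>j=1..k. a j)"
  define s where "s = (\<Sum>j\<in>S \<inter> {1..k}. a j)"
  define c where "c = card (S \<inter> {k+1, k+2})"
  have c_le: "c \<le> 2"
    using card_mono[of "{k+1, k+2}" "S \<inter> {k+1, k+2}"] by (simp add: c_def card_insert_if)
  have both_iff: "{k+1, k+2} \<subseteq> S \<longleftrightarrow> c = 2"
    using card_subset_eq[of "{k+1, k+2}" "S \<inter> {k+1, k+2}"] by (auto simp: c_def)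
  have win: "winning partition_weight partition_quota S \<longleftrightarrow> 4 * A + 2 \<le> 8 * s + c"
    using partition_winning_iff[OF S] by (simp add: A_def s_def c_def)
  have win_minus: "winning partition_weight partition_quota (S - {i}) \<longleftrightarrow> 4 * A + 2 \<le> 8 * s + (c - 1)"
    and c_pos: "1 \<le> c" if "i \<in> S"
  proof -
    have "(S - {i}) \<inter> {1..k} = S \<inter> {1..k}" "(S - {i}) \<inter> {k+1, k+2} = (S \<inter> {k+1, k+2}) - {i}"
      using i by auto
    moreover have "i \<in> S \<inter> {k+1, k+2}" using i that by blast
    moreover have "S - {i} \<subseteq> {1..k+2}" using S by blast
    ultimately show "winning partition_weight partition_quota (S - {i}) \<longleftrightarrow> 4 * A + 2 \<le> 8 * s + (c - 1)"
      using partition_winning_iff[of "S - {i}"] by (simp add: A_def s_def c_def card_Diff_singleton)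
    show "1 \<le> c" using \<open>i \<in> S \<inter> {k+1, k+2}\<close> by (auto simp: c_def Suc_le_eq card_gt_0_iff)
  qed
  text \<open>The weight 8 s + c must equal the quota 4 A + 2, forcing c = 2 and 2 s = A.\<close>
  have parity: "(4 * A + 2 \<le> 8 * s + c \<and> \<not> 4 * A + 2 \<le> 8 * s + (c - 1)) \<longleftrightarrow> c = 2 \<and> 2 * s = A"
    if "1 \<le> c" "c \<le> 2" for A s c :: nat
    using that by presburger
  have "critical partition_weight partition_quota S i \<longleftrightarrow> i \<in> S \<and> c = 2 \<and> 2 * s = A"
    using win win_minus c_pos parity c_le by (auto simp: critical_def)
  also have "\<dots> \<longleftrightarrow> {k+1, k+2} \<subseteq> S \<and> S \<inter> {1..k} \<in> balanced_sets"
    using both_iff i by (auto simp: balanced_sets_def A_def s_def)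
  finally show ?thesis .
qed

lemma eta_small_player:
  assumes "i \<in> {k+1, k+2}"
  shows "eta {1..k+2} partition_weight partition_quota i = card balanced_sets"
proof -
  have "{S. S \<subseteq> {1..k+2} \<and> critical partition_weight partition_quota S i}
        = (\<lambda>P. P \<union> {k+1, k+2}) ` balanced_sets"
  proof (intro equalityI subsetI)
    fix S assume "S \<in> {S. S \<subseteq> {1..k+2} \<and> critical partition_weight partition_quota S i}"
    then have "S \<subseteq> {1..k+2}" "{k+1, k+2} \<subseteq> S" "S \<inter> {1..k} \<in> balanced_sets"
      using critical_small_iff[OF _ assms] by auto
    moreover from this have "S = (S \<inter> {1..k}) \<union> {k+1, k+2}" by auto
    ultimately show "S \<in> (\<lambda>P. P \<union> {k+1, k+2}) ` balanced_sets" by blast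
  next
    fix S assume "S \<in> (\<lambda>P. P \<union> {k+1, k+2}) ` balanced_sets"
    then obtain P where "P \<in> balanced_sets" "S = P \<union> {k+1, k+2}" by blast
    moreover from this have "S \<inter> {1..k} = P" "S \<subseteq> {1..k+2}"
      by (auto simp: balanced_sets_def)
    ultimately show "S \<in> {S. S \<subseteq> {1..k+2} \<and> critical partition_weight partition_quota S i}"
      using critical_small_iff[OF _ assms] by auto
  qed
  moreover have "inj_on (\<lambda>P. P \<union> {k+1, k+2}) balanced_sets"
    by (rule inj_on_inverseI[where g = "\<lambda>S. S \<inter> {1..k}"]) (auto simp: balanced_sets_def)
  ultimately show ?thesis unfolding eta_def by (simp add: card_image)
qed

abbreviation merged_players :: "nat set" where
  "merged_players \<equiv> merge_players {1..k+2} {k+1, k+2} (k+2)"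

abbreviation merged_weight :: "nat \<Rightarrow> real" where
  "merged_weight \<equiv> merge_weights partition_weight {k+1, k+2} (k+2)"

lemma merged_players_eq: "merged_players = insert (k+2) {1..k}"
  by (auto simp: merge_players_def)

lemma eta_merged_last:
  "eta merged_players merged_weight partition_quota (k+2) = card balanced_sets"
proof -
  have "{R. R \<subseteq> {1..k+2} - {k+1, k+2} \<and> winning partition_weight partition_quota (R \<union> {k+1, k+2})
          \<and> \<not> winning partition_weight partition_quota R} = balanced_sets"
  proof -
    have "R \<union> {k+1, k+2} \<subseteq> {1..k+2}" "(R \<union> {k+1, k+2}) \<inter> {1..k} = R"
      "R \<inter> {k+1, k+2} = {}" "(R \<union> {k+1, k+2}) \<inter> {k+1, k+2} = {k+1, k+2}"
      if "R \<subseteq> {1..k}" for R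
      using that by auto
    moreover have "{1..k+2} - {k+1, k+2} = {1..k}" by auto
    ultimately show ?thesis
      using partition_winning_iff
      by (auto simp: balanced_sets_def Int_absorb2)
  qed
  then show ?thesis by (simp add: eta_merged_player)
qed

text \<open>Merging removes at least the swings of the absorbed player k+1 from the
  total swing count.\<close>
lemma total_eta_drops:
  "(\<Sum>j\<in>merged_players. eta merged_players merged_weight partition_quota j) + card balanced_sets
   \<le> (\<Sum>j\<in>{1..k+2}. eta {1..k+2} partition_weight partition_quota j)"
proof -
  have large: "(\<Sum>j=1..k. eta merged_players merged_weight partition_quota j)
               \<le> (\<Sum>j=1..k. eta {1..k+2} partition_weight partition_quota j)"
    by (rule sum_mono, rule eta_merge_le) auto
  have "(\<Sum>j\<in>{1..k+2}. f j) = (\<Sum>j=1..k. f j) + f (k+1) + f (k+2)" for f :: "nat \<Rightarrow> nat"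
    by simp
  moreover have "(\<Sum>j\<in>merged_players. f j) = (\<Sum>j=1..k. f j) + f (k+2)" for f :: "nat \<Rightarrow> nat"
    unfolding merged_players_eq by simp
  ultimately show ?thesis
    using large eta_merged_last eta_small_player[of "k+1"] eta_small_player[of "k+2"]
    by simp
qed

text \<open>The Banzhaf index of the last player grows under the merger exactly when its
  (unchanged) swing count |G| is positive, because the total swing count then
  strictly drops.\<close>
lemma banzhaf_last_increases_iff:
  "banzhaf merged_players merged_weight partition_quota (k+2)
     > banzhaf {1..k+2} partition_weight partition_quota (k+2)
   \<longleftrightarrow> balanced_sets \<noteq> {}"
proof -
  let ?G = "card balanced_sets"
  let ?D = "\<Sum>j\<in>{1..k+2}. eta {1..k+2} partition_weight partition_quota j"
  let ?D' = "\<Sum>j\<in>merged_players. eta merged_players merged_weight partition_quota j"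
  have eta_last: "eta {1..k+2} partition_weight partition_quota (k + 2) = ?G"
    by (rule eta_small_player) simp
  have "real ?G / real ?D < real ?G / real ?D'" if "?G \<noteq> 0"
  proof (rule divide_strict_left_mono)
    have "k + 2 \<in> merged_players" "finite merged_players"
      by (simp_all add: merge_players_def)
    then have "eta merged_players merged_weight partition_quota (k + 2) \<le> ?D'"
      by (intro member_le_sum) auto
    then have "?G \<le> ?D'" by (simp only: eta_merged_last)
    with total_eta_drops that have totals: "?D' < ?D" "0 < ?D'" by linarith+
    show "real ?D' < real ?D" using totals(1) by (simp only: of_nat_less_iff)
    show "0 < real ?G" using that by simp
    show "0 < real ?D * real ?D'"
      using totals by (intro mult_pos_pos) (simp_all only: of_nat_0_less_iff)
  qed
  then have "banzhaf merged_players merged_weight partition_quota (k+2)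
               > banzhaf {1..k+2} partition_weight partition_quota (k+2) \<longleftrightarrow> ?G \<noteq> 0"
    unfolding banzhaf_def eta_merged_last eta_last by (cases "?G = 0") auto
  then show ?thesis using finite_balanced_sets by simp
qed

end

theorem mainTheorem9:
  fixes a :: "nat \<Rightarrow> nat" and k :: nat
  assumes apos: "\<And>j. j \<in> {1..k} \<Longrightarrow> a j > 0"
  defines "A \<equiv> (\<Sum>j=1..k. a j)"
  defines "n \<equiv> k + 2"
  defines "w \<equiv> (\<lambda>j::nat. if j \<in> {1..k} then 8 * real (a j) else if j = k + 1 \<or> j = k + 2 then 1 else 0)"
  defines "q \<equiv> 4 * real A + 2"
  shows "banzhaf (merge_players {1..n} {n - 1, n} n) (merge_weights w {n - 1, n} n) q n
           > banzhaf {1..n} w q n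
         \<longleftrightarrow> (\<exists>P \<subseteq> {1..k}. (\<Sum>j\<in>P. a j) = (\<Sum>j\<in>{1..k} - P. a j))"
proof -
  text \<open>The statement's game is the partition game, with n = k + 2 absorbing n - 1 = k + 1.\<close>
  have "k + 2 - 1 = k + 1" "w = partition_weight a k" "q = partition_quota a k"
    by (auto simp: w_def partition_weight_def q_def A_def partition_quota_def)
  then have "banzhaf (merge_players {1..n} {n - 1, n} n) (merge_weights w {n - 1, n} n) q n
               > banzhaf {1..n} w q n \<longleftrightarrow> balanced_sets a k \<noteq> {}"
    unfolding n_def by (simp only: banzhaf_last_increases_iff)
  also have "\<dots> \<longleftrightarrow> (\<exists>P \<subseteq> {1..k}. (\<Sum>j\<in>P. a j) = (\<Sum>j\<in>{1..k} - P. a j))"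
    by (rule balanced_sets_nonempty_iff)
  finally show ?thesis .
qed

end
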